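(* Fix $a>1$ and $n\ge2$. Let $\mathsf{F}$ be the $n\times n$ lower-triangular matrix with $(\mathsf{F})_{ii}=1$, $(\mathsf{F})_{i+1,i}=-a$, and all other entries $0$, and let $\mu_{n,1}\le\cdots\le\mu_{n,n}$ be the eigenvalues of $\mathsf{F}'\mathsf{F}$. Define $\xi_{n,i}=1+a^2-2a\cos\frac{i\pi}{n+1}$. Then for every $i=2,\ldots,n$, $$\xi_{n-1,i-1}\le\mu_{n,i}\le\xi_{n,i},$$ and the smallest eigenvalue satisfies $$2\log a+\frac{c_2}n\ge-\frac1n\log\mu_{n,1}\ge2\log a-\frac{c_1}n,$$ with $c_1=2\log(a+1)+\frac{a\pi}{a^2-1}$ and $c_2=2\log\frac a{a^2-1}+\frac{2a\pi}{a^2-1}$.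
   Context: Logarithms are natural. *)

theory Defs
  imports "Jordan_Normal_Form.Char_Poly" Complex_Main
begin

definition Fmat :: "real \<Rightarrow> nat \<Rightarrow> real mat" where
  "Fmat a n = mat n n (\<lambda>(i, j). if i = j then 1 else if i = j + 1 then - a else 0)"

definition sorted_eigenvalues :: "real mat \<Rightarrow> real list" where
  "sorted_eigenvalues A =
     (THE es. sorted es \<and> char_poly A = (\<Prod>e\<leftarrow>es. [:- e, 1:]))"

text \<open>mu n i (1-based i): the i-th smallest eigenvalue of F'F.\<close>
definition mu :: "real \<Rightarrow> nat \<Rightarrow> nat \<Rightarrow> real" where
  "mu a n i = sorted_eigenvalues (transpose_mat (Fmat a n) * Fmat a n) ! (i - 1)"

definition xi :: "real \<Rightarrow> nat \<Rightarrow> nat \<Rightarrow> real" where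
  "xi a n i = 1 + a^2 - 2 * a * cos (real i * pi / real (n + 1))"

end

theory Submission
  imports Defs
begin

text \<open>
  \<open>F'F\<close> is the tridiagonal matrix with diagonal \<open>1 + a^2\<close> and off-diagonal \<open>-a\<close>, except that
  its last diagonal entry is \<open>1\<close>. Expanding along the last row, its characteristic polynomial is
  \<open>P n + a^2 P (n - 1)\<close>, where \<open>P m\<close> is the characteristic polynomial of the \<open>m \<times> m\<close>
  tridiagonal Toeplitz matrix; the Chebyshev identity
  \<open>P m (1 + a^2 - 2 a cos t) sin t = (-a)^m sin ((m + 1) t)\<close> shows that the roots of \<open>P m\<close> are
  \<open>xi a m 1 < \<dots> < xi a m m\<close>. At the interlaced points
  \<open>0 < xi a n 1 < xi a (n - 1) 1 < xi a n 2 < \<dots> < xi a (n - 1) (n - 1) < xi a n n\<close>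
  the characteristic polynomial of \<open>F'F\<close> alternates in sign, so each interval
  \<open>(xi a (n - 1) (i - 1), xi a n i)\<close>, with \<open>0\<close> as left end of the first one, contains exactly one
  eigenvalue. Finally the eigenvalues multiply to \<open>det (F'F) = 1\<close> while the \<open>xi a m j\<close> multiply to
  \<open>(a^(2m+2) - 1) / (a^2 - 1)\<close>, so the interlacing bounds \<open>mu a n 1\<close> from both sides.
\<close>

section \<open>Linear factors and sorted eigenvalues\<close>

lemma prod_atLeast1_atMost_Suc:
  "(\<Prod>i=1..Suc m. f i) = f 1 * (\<Prod>i=1..m. f (Suc i))"
  by (simp only: One_nat_def prod.atLeast1_atMost_eq prod.lessThan_Suc_shift)

lemma order_linear_factors:
  fixes es :: "'a::idom list"
  shows "order x (\<Prod>e\<leftarrow>es. [:-e, 1:]) = count (mset es) x"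
proof (induction es)
  case Nil
  show ?case by (simp add: order_0I)
next
  case (Cons e es)
  let ?P = "\<Prod>e\<leftarrow>es. [:-e, 1:]"
  have "monic ?P"
    by (rule monic_prod_list) auto
  then have "[:-e, 1:] * ?P \<noteq> 0"
    by (intro no_zero_divisors) auto
  then have "order x ([:-e, 1:] * ?P) = order x [:-e, 1:] + order x ?P"
    by (rule order_mult)
  moreover have "order x [:-e, 1:] = (if x = e then 1 else 0)"
    using order_power_n_n[of e 1] by (auto intro: order_0I)
  ultimately show ?case
    using Cons.IH by simp
qed

lemma sorted_eigenvalues_eqI:
  assumes "sorted es" and "char_poly A = (\<Prod>e\<leftarrow>es. [:-e, 1:])"
  shows "sorted_eigenvalues A = es"
  unfolding sorted_eigenvalues_def
proof (rule the_equality)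
  fix rs assume rs: "sorted rs \<and> char_poly A = (\<Prod>e\<leftarrow>rs. [:-e, 1:])"
  then have "mset rs = mset es"
    using assms(2) by (metis multiset_eqI order_linear_factors)
  then show "rs = es"
    using rs assms(1) by (metis properties_for_sort sorted_sort_id)
qed (use assms in simp)

lemma poly_linear_factors_0:
  "poly (\<Prod>e\<leftarrow>es. [:-e, 1:]) 0 = (-1) ^ length es * prod_list (es :: 'a::comm_ring_1 list)"
  by (induction es) auto

lemma poly_char_poly_0:
  fixes A :: "'a::field mat"
  assumes "A \<in> carrier_mat n n"
  shows "poly (char_poly A) 0 = (-1) ^ n * det A"
proof -
  have "char_matrix A 0 = A" and "- A = (-1) \<cdot>\<^sub>m A"
    using assms by (auto simp: char_matrix_def)
  then show ?thesis
    using char_poly_matrix[OF assms, of 0] assms by simp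
qed

lemma prod_list_eq_det:
  fixes A :: "'a::field mat"
  assumes "A \<in> carrier_mat n n" and "char_poly A = (\<Prod>e\<leftarrow>es. [:-e, 1:])"
  shows "prod_list es = det A"
proof -
  have "length es = n"
    using degree_monic_char_poly[OF assms(1)] degree_linear_factors[of uminus es] assms(2) by simp
  then show ?thesis
    using poly_char_poly_0[OF assms(1)] poly_linear_factors_0[of es] assms(2) by simp
qed

lemma monic_eq_linear_factors:
  fixes p :: "'a::idom poly"
  assumes "degree p = length rs" and "coeff p (length rs) = 1" and "distinct rs"
    and "\<And>r. r \<in> set rs \<Longrightarrow> poly p r = 0"
  shows "p = (\<Prod>r\<leftarrow>rs. [:-r, 1:])"
proof (rule poly_eqI_degree_lead_coeff[where n = "length rs" and A = "set rs"])
  have "monic (\<Prod>r\<leftarrow>rs. [:-r, 1:])"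
    by (rule monic_prod_list) auto
  then show "coeff p (length rs) = coeff (\<Prod>r\<leftarrow>rs. [:-r, 1:]) (length rs)"
    using assms(2) degree_linear_factors[of uminus rs] by simp
  show "degree (\<Prod>r\<leftarrow>rs. [:-r, 1:]) \<le> length rs"
    using degree_linear_factors[of uminus rs] by simp
  show "length rs \<le> card (set rs)"
    using distinct_card[OF assms(3)] by simp
qed (use assms linear_poly_root in auto)

lemma sorted_eigenvalues_in_intervals:
  fixes A :: "real mat" and lo hi :: "nat \<Rightarrow> real"
  assumes A: "A \<in> carrier_mat n n"
    and sign_change: "\<And>j. j < n \<Longrightarrow>
      lo j < hi j \<and> poly (char_poly A) (lo j) * poly (char_poly A) (hi j) < 0"
    and disjoint: "\<And>j. Suc j < n \<Longrightarrow> hi j \<le> lo (Suc j)"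
  shows "char_poly A = (\<Prod>e\<leftarrow>sorted_eigenvalues A. [:-e, 1:])"
    and "length (sorted_eigenvalues A) = n"
    and "\<And>j. j < n \<Longrightarrow> lo j < sorted_eigenvalues A ! j \<and> sorted_eigenvalues A ! j < hi j"
proof -
  have "\<forall>j. \<exists>x. j < n \<longrightarrow> lo j < x \<and> x < hi j \<and> poly (char_poly A) x = 0"
    using sign_change poly_IVT by metis
  then obtain r where r: "\<And>j. j < n \<Longrightarrow> lo j < r j \<and> r j < hi j \<and> poly (char_poly A) (r j) = 0"
    by metis
  define rs where "rs = map r [0..<n]"
  have "sorted_wrt (<) rs"
    unfolding sorted_wrt_iff_nth_Suc_transp[OF transp_on_less]
  proof (intro allI impI)
    fix j assume "Suc j < length rs"
    then have "r j < hi j" and "hi j \<le> lo (Suc j)" and "lo (Suc j) < r (Suc j)"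
      using r disjoint by (auto simp: rs_def)
    then show "rs ! j < rs ! Suc j"
      using \<open>Suc j < length rs\<close> by (simp add: rs_def del: upt_Suc)
  qed
  then have sorted: "sorted rs" and distinct: "distinct rs"
    by (auto simp: strict_sorted_iff)
  have cp: "char_poly A = (\<Prod>e\<leftarrow>rs. [:-e, 1:])"
    using degree_monic_char_poly[OF A] r by (intro monic_eq_linear_factors distinct) (auto simp: rs_def)
  have "sorted_eigenvalues A = rs"
    using sorted cp by (rule sorted_eigenvalues_eqI)
  then show "char_poly A = (\<Prod>e\<leftarrow>sorted_eigenvalues A. [:-e, 1:])"
    and "length (sorted_eigenvalues A) = n"
    and "\<And>j. j < n \<Longrightarrow> lo j < sorted_eigenvalues A ! j \<and> sorted_eigenvalues A ! j < hi j"
    using cp r by (auto simp: rs_def)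
qed

section \<open>Symmetric tridiagonal matrices\<close>

definition tridiag_mat :: "nat \<Rightarrow> 'a \<Rightarrow> 'a \<Rightarrow> 'a \<Rightarrow> 'a::zero mat" where
  "tridiag_mat m d l b = mat m m (\<lambda>(i, j).
     if i = j then (if Suc i = m then l else d)
     else if i = Suc j \<or> j = Suc i then b else 0)"

lemma tridiag_mat_carrier [simp]: "tridiag_mat m d l b \<in> carrier_mat m m"
  by (simp add: tridiag_mat_def)

lemma det_tridiag_mat_0: "det (tridiag_mat 0 d l b) = 1"
  by (simp add: tridiag_mat_def det_def)

lemma det_tridiag_mat_1: "det (tridiag_mat (Suc 0) d l b) = l"
proof -
  have "det (tridiag_mat (Suc 0) d l b) =
    (\<Sum>j<Suc 0. tridiag_mat (Suc 0) d l b $$ (0, j) * cofactor (tridiag_mat (Suc 0) d l b) 0 j)"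
    by (rule laplace_expansion_row) auto
  then show ?thesis
    by (simp add: tridiag_mat_def cofactor_def mat_delete_def det_def)
qed

lemma det_tridiag_mat_Suc_Suc:
  "det (tridiag_mat (Suc (Suc m)) d l b) = l * det (tridiag_mat (Suc m) d d b) - b * b * det (tridiag_mat m d d b)"
proof -
  let ?A = "tridiag_mat (Suc (Suc m)) d l b"
  let ?M = "mat_delete ?A (Suc m) m"
  have "det ?A = (\<Sum>j<Suc (Suc m). ?A $$ (Suc m, j) * cofactor ?A (Suc m) j)"
    by (rule laplace_expansion_row) auto
  also have "\<dots> = ?A $$ (Suc m, Suc m) * cofactor ?A (Suc m) (Suc m) + ?A $$ (Suc m, m) * cofactor ?A (Suc m) m"
    by (simp add: tridiag_mat_def)
  finally have last_row: "det ?A = l * det (mat_delete ?A (Suc m) (Suc m)) - b * det ?M"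
    by (simp add: tridiag_mat_def cofactor_def)
  have "mat_delete ?A (Suc m) (Suc m) = tridiag_mat (Suc m) d d b"
    by (rule eq_matI) (auto simp: tridiag_mat_def mat_delete_def)
  moreover have "det ?M = b * det (tridiag_mat m d d b)"
  proof -
    have "?M \<in> carrier_mat (Suc m) (Suc m)"
      by (simp add: mat_delete_def tridiag_mat_def)
    then have "det ?M = (\<Sum>i<Suc m. ?M $$ (i, m) * cofactor ?M i m)"
      by (rule laplace_expansion_column) auto
    also have "\<dots> = ?M $$ (m, m) * cofactor ?M m m"
      by (simp add: tridiag_mat_def mat_delete_def)
    moreover have "mat_delete ?M m m = tridiag_mat m d d b"
      by (rule eq_matI) (auto simp: tridiag_mat_def mat_delete_def)
    ultimately show ?thesis
      by (simp add: tridiag_mat_def mat_delete_def cofactor_def)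
  qed
  ultimately show ?thesis
    using last_row by simp
qed

lemma det_tridiag_mat_last:
  "det (tridiag_mat (Suc m) d l b) = det (tridiag_mat (Suc m) d d b) + (l - d) * det (tridiag_mat m d d b)"
  by (cases m) (simp_all add: det_tridiag_mat_0 det_tridiag_mat_1 det_tridiag_mat_Suc_Suc algebra_simps)

lemma char_poly_tridiag_mat:
  "char_poly (tridiag_mat m d l b) = det (tridiag_mat m [:-d, 1:] [:-l, 1:] [:-b:])"
proof -
  have "char_poly_matrix (tridiag_mat m d l b) = tridiag_mat m [:-d, 1:] [:-l, 1:] [:-b:]"
    by (rule eq_matI) (auto simp: char_poly_matrix_def tridiag_mat_def)
  then show ?thesis
    by (simp add: char_poly_def)
qed

section \<open>Chebyshev-like characteristic polynomials\<close>

definition toeplitz_char_poly :: "real \<Rightarrow> nat \<Rightarrow> real poly" where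
  "toeplitz_char_poly a m = char_poly (tridiag_mat m (1 + a^2) (1 + a^2) (-a))"

lemma toeplitz_char_poly_eq_det:
  "toeplitz_char_poly a m = det (tridiag_mat m [:-(1 + a^2), 1:] [:-(1 + a^2), 1:] [:a:])"
  by (simp add: toeplitz_char_poly_def char_poly_tridiag_mat)

lemma toeplitz_char_poly_0: "toeplitz_char_poly a 0 = 1"
  by (simp add: toeplitz_char_poly_eq_det det_tridiag_mat_0)

lemma toeplitz_char_poly_1: "toeplitz_char_poly a (Suc 0) = [:-(1 + a^2), 1:]"
  by (simp add: toeplitz_char_poly_eq_det det_tridiag_mat_1)

lemma toeplitz_char_poly_Suc_Suc:
  "toeplitz_char_poly a (Suc (Suc m)) =
     [:-(1 + a^2), 1:] * toeplitz_char_poly a (Suc m) - [:a^2:] * toeplitz_char_poly a m"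
  by (simp add: toeplitz_char_poly_eq_det det_tridiag_mat_Suc_Suc power2_eq_square)

lemma poly_toeplitz_char_poly_cos:
  "poly (toeplitz_char_poly a m) (1 + a^2 - 2 * a * cos t) * sin t = (-a)^m * sin (real (Suc m) * t)"
proof (induction m rule: induct_nat_012)
  case 0
  show ?case by (simp add: toeplitz_char_poly_0)
next
  case 1
  show ?case
    using sin_double[of t] by (simp add: toeplitz_char_poly_1 algebra_simps)
next
  case (ge2 m)
  let ?x = "1 + a^2 - 2 * a * cos t"
  have "sin (real (Suc (Suc m)) * t + t) + sin (real (Suc (Suc m)) * t - t) =
      2 * cos t * sin (real (Suc (Suc m)) * t)"
    by (simp add: sin_add sin_diff)
  then have three_term: "sin (real (Suc (Suc (Suc m))) * t) =
      2 * cos t * sin (real (Suc (Suc m)) * t) - sin (real (Suc m) * t)"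
    by (simp add: algebra_simps)
  have "poly (toeplitz_char_poly a (Suc (Suc m))) ?x * sin t =
      - 2 * a * cos t * (poly (toeplitz_char_poly a (Suc m)) ?x * sin t)
      - a^2 * (poly (toeplitz_char_poly a m) ?x * sin t)"
    by (simp add: toeplitz_char_poly_Suc_Suc algebra_simps)
  also have "\<dots> = (-a)^(Suc (Suc m)) * sin (real (Suc (Suc (Suc m))) * t)"
    unfolding ge2.IH three_term by (simp add: algebra_simps power2_eq_square)
  finally show ?case .
qed

lemma poly_toeplitz_char_poly_0:
  "poly (toeplitz_char_poly a m) 0 * (a^2 - 1) = (-1)^m * (a^(2 * m + 2) - 1)"
proof (induction m rule: induct_nat_012)
  case (ge2 m)
  have "poly (toeplitz_char_poly a (Suc (Suc m))) 0 * (a^2 - 1) =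
      - (1 + a^2) * (poly (toeplitz_char_poly a (Suc m)) 0 * (a^2 - 1))
      - a^2 * (poly (toeplitz_char_poly a m) 0 * (a^2 - 1))"
    by (simp add: toeplitz_char_poly_Suc_Suc algebra_simps)
  also have "\<dots> = (-1)^(Suc (Suc m)) * (a^(2 * Suc (Suc m) + 2) - 1)"
    unfolding ge2.IH by (simp add: algebra_simps power2_eq_square power_add)
  finally show ?case .
qed (simp_all add: toeplitz_char_poly_0 toeplitz_char_poly_1 algebra_simps power2_eq_square)

lemma sin_angle_pos:
  assumes "1 \<le> j" and "j \<le> m"
  shows "0 < sin (real j * pi / real (Suc m))"
proof (rule sin_gt_zero)
  have "real j / real (Suc m) * pi < 1 * pi"
    using assms by (intro mult_strict_right_mono) auto
  then show "real j * pi / real (Suc m) < pi"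
    by simp
qed (use assms in simp)

lemma xi_less_xi:
  assumes "a > 0" and "real j / real (Suc n) < real k / real (Suc n')" and "k \<le> Suc n'"
  shows "xi a n j < xi a n' k"
proof -
  have "real j / real (Suc n) * pi < real k / real (Suc n') * pi"
    using assms(2) by (intro mult_strict_right_mono) auto
  moreover have "real k / real (Suc n') * pi \<le> 1 * pi"
    using assms(3) by (intro mult_right_mono) auto
  ultimately have "cos (real k * pi / real (Suc n')) < cos (real j * pi / real (Suc n))"
    by (intro cos_monotone_0_pi) auto
  then show ?thesis
    using assms(1) by (simp add: xi_def)
qed

lemma xi_0: "xi a n 0 = (a - 1)^2"
  by (simp add: xi_def power2_eq_square algebra_simps)

lemma sq_less_xi:
  assumes "a > 0" and "1 \<le> j" and "j \<le> Suc n"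
  shows "(a - 1)^2 < xi a n j"
  using xi_less_xi[of a 0 n j n] assms by (simp add: xi_0)

lemma poly_toeplitz_char_poly_xi:
  assumes "1 \<le> j" and "j \<le> m"
  shows "poly (toeplitz_char_poly a m) (xi a m j) = 0"
proof -
  let ?t = "real j * pi / real (Suc m)"
  have "poly (toeplitz_char_poly a m) (xi a m j) * sin ?t = (-a)^m * sin (real j * pi)"
    using poly_toeplitz_char_poly_cos[of a m ?t] by (simp add: xi_def)
  then show ?thesis
    using sin_angle_pos[OF assms] by simp
qed

lemma toeplitz_char_poly_eq_prod:
  assumes "a > 0"
  shows "toeplitz_char_poly a m = (\<Prod>x\<leftarrow>map (xi a m) [1..<Suc m]. [:-x, 1:])"
proof (rule monic_eq_linear_factors)
  show "degree (toeplitz_char_poly a m) = length (map (xi a m) [1..<Suc m])"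
    and "coeff (toeplitz_char_poly a m) (length (map (xi a m) [1..<Suc m])) = 1"
    using degree_monic_char_poly[OF tridiag_mat_carrier[of m "1 + a^2" "1 + a^2" "-a"]]
    by (simp_all add: toeplitz_char_poly_def del: upt_Suc)
  have "sorted_wrt (<) (map (xi a m) [1..<Suc m])"
    unfolding sorted_wrt_map
    by (rule sorted_wrt_mono_rel[OF _ sorted_wrt_upt]) (auto intro!: xi_less_xi assms divide_strict_right_mono)
  then show "distinct (map (xi a m) [1..<Suc m])"
    by (simp add: strict_sorted_iff del: upt_Suc)
qed (auto simp: poly_toeplitz_char_poly_xi)

lemma prod_xi:
  assumes "a > 0"
  shows "(\<Prod>j=1..m. xi a m j) * (a^2 - 1) = a^(2 * m + 2) - 1"
proof -
  have "(\<Prod>j=1..m. xi a m j) = prod_list (map (xi a m) [1..<Suc m])"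
    by (simp add: prod.distinct_set_conv_list[symmetric] atLeastLessThanSuc_atLeastAtMost del: upt_Suc)
  then have "poly (toeplitz_char_poly a m) 0 = (-1)^m * (\<Prod>j=1..m. xi a m j)"
    unfolding toeplitz_char_poly_eq_prod[OF assms] poly_linear_factors_0 by (simp del: upt_Suc)
  then show ?thesis
    using poly_toeplitz_char_poly_0[of a m] by simp
qed

section \<open>The matrix \<open>F' F\<close>\<close>

abbreviation FtF :: "real \<Rightarrow> nat \<Rightarrow> real mat" where
  "FtF a n \<equiv> transpose_mat (Fmat a n) * Fmat a n"

lemma sum_of_bool_mult_of_bool:
  "(\<Sum>k\<in>{0..<n}. of_bool (k = x) * of_bool (k = y) :: 'a::semiring_1) = of_bool (x = y \<and> x < (n::nat))"
  by (induction n) auto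

lemma FtF_eq_tridiag_mat: "FtF a n = tridiag_mat n (1 + a^2) 1 (-a)"
proof (rule eq_matI)
  fix i j assume "i < dim_row (tridiag_mat n (1 + a^2) 1 (-a))" and "j < dim_col (tridiag_mat n (1 + a^2) 1 (-a))"
  then have i: "i < n" and j: "j < n"
    by (simp_all add: tridiag_mat_def)
  let ?e = "\<lambda>k x. of_bool (k = x) :: real"
  have "FtF a n $$ (i, j) = (\<Sum>k\<in>{0..<n}. (?e k i - a * ?e k (Suc i)) * (?e k j - a * ?e k (Suc j)))"
    using i j by (auto simp: Fmat_def scalar_prod_def intro!: sum.cong)
  also have "\<dots> = (\<Sum>k\<in>{0..<n}. ?e k i * ?e k j - a * (?e k i * ?e k (Suc j))
      - a * (?e k (Suc i) * ?e k j) + a^2 * (?e k (Suc i) * ?e k (Suc j)))"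
    by (intro sum.cong) (auto simp: algebra_simps power2_eq_square)
  also have "\<dots> = (\<Sum>k\<in>{0..<n}. ?e k i * ?e k j) - a * (\<Sum>k\<in>{0..<n}. ?e k i * ?e k (Suc j))
      - a * (\<Sum>k\<in>{0..<n}. ?e k (Suc i) * ?e k j) + a^2 * (\<Sum>k\<in>{0..<n}. ?e k (Suc i) * ?e k (Suc j))"
    by (simp only: sum.distrib sum_subtractf sum_distrib_left)
  also have "\<dots> = tridiag_mat n (1 + a^2) 1 (-a) $$ (i, j)"
    using i j unfolding sum_of_bool_mult_of_bool by (auto simp: tridiag_mat_def)
  finally show "FtF a n $$ (i, j) = tridiag_mat n (1 + a^2) 1 (-a) $$ (i, j)" .
qed (simp_all add: tridiag_mat_def Fmat_def)

lemma FtF_carrier: "FtF a n \<in> carrier_mat n n"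
  by (simp add: FtF_eq_tridiag_mat)

lemma det_FtF: "det (FtF a n) = 1"
proof -
  have F: "Fmat a n \<in> carrier_mat n n"
    by (simp add: Fmat_def)
  have "det (Fmat a n) = prod_list (diag_mat (Fmat a n))"
    by (rule det_lower_triangular[OF _ F]) (auto simp: Fmat_def)
  also have "diag_mat (Fmat a n) = replicate n 1"
    by (rule nth_equalityI) (auto simp: diag_mat_def Fmat_def)
  finally show ?thesis
    using F by (simp add: det_mult[of _ n] det_transpose)
qed

lemma char_poly_FtF:
  "char_poly (FtF a (Suc m)) = toeplitz_char_poly a (Suc m) + [:a^2:] * toeplitz_char_poly a m"
proof -
  let ?D = "[:-(1 + a^2), 1:]"
  have "char_poly (FtF a (Suc m)) = det (tridiag_mat (Suc m) ?D [:-1, 1:] [:a:])"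
    by (simp add: FtF_eq_tridiag_mat char_poly_tridiag_mat)
  also have "\<dots> = det (tridiag_mat (Suc m) ?D ?D [:a:]) + ([:-1, 1:] - ?D) * det (tridiag_mat m ?D ?D [:a:])"
    by (rule det_tridiag_mat_last)
  also have "[:-1, 1:] - ?D = [:a^2:]"
    by simp
  finally show ?thesis
    by (simp only: toeplitz_char_poly_eq_det)
qed

lemma poly_char_poly_FtF:
  "poly (char_poly (FtF a (Suc m))) x =
     poly (toeplitz_char_poly a (Suc m)) x + a^2 * poly (toeplitz_char_poly a m) x"
  by (simp add: char_poly_FtF)

lemma poly_char_poly_FtF_0: "poly (char_poly (FtF a n)) 0 = (-1)^n"
  using poly_char_poly_0[OF FtF_carrier] by (simp add: det_FtF)

lemma poly_char_poly_FtF_xi_prev: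
  assumes "1 \<le> j" and "j < n"
  shows "poly (char_poly (FtF a n)) (xi a (n - 1) j) = (-1)^(n + j) * a^n"
proof -
  obtain m where n: "n = Suc m"
    using assms by (cases n) auto
  define t where "t = real j * pi / real (Suc m)"
  have "0 < sin t"
    using sin_angle_pos[of j m] assms n by (simp add: t_def)
  have "real (Suc n) * t = real j * pi + t"
    by (simp add: t_def n field_simps)
  then have "sin (real (Suc n) * t) = (-1)^j * sin t"
    by (simp add: sin_add)
  moreover have "xi a m j = 1 + a^2 - 2 * a * cos t"
    by (simp add: xi_def t_def)
  ultimately have "poly (toeplitz_char_poly a n) (xi a m j) * sin t = ((-a)^n * (-1)^j) * sin t"
    using poly_toeplitz_char_poly_cos[of a n t] by simp
  then have Pn: "poly (toeplitz_char_poly a n) (xi a m j) = (-a)^n * (-1)^j"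
    using \<open>0 < sin t\<close> by simp
  have "poly (char_poly (FtF a n)) (xi a (n - 1) j) =
      poly (toeplitz_char_poly a n) (xi a m j) + a^2 * poly (toeplitz_char_poly a m) (xi a m j)"
    unfolding n by (simp add: poly_char_poly_FtF)
  also have "\<dots> = (-a)^n * (-1)^j"
    using Pn poly_toeplitz_char_poly_xi[of j m a] assms n by simp
  also have "\<dots> = (-1)^(n + j) * a^n"
    unfolding power_minus[of a] power_add by (simp only: mult_ac)
  finally show ?thesis .
qed

lemma poly_char_poly_FtF_xi:
  assumes "1 \<le> j" and "j \<le> n"
  shows "poly (char_poly (FtF a n)) (xi a n j) = (-1)^(n + j) * a^(Suc n)"
proof -
  obtain m where n: "n = Suc m"
    using assms by (cases n) auto
  define t where "t = real j * pi / real (Suc n)"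
  have "0 < sin t"
    using sin_angle_pos[of j n] assms by (simp add: t_def)
  have "real (Suc m) * t = real j * pi - t"
    by (simp add: t_def n field_simps)
  then have "sin (real (Suc m) * t) = - ((-1)^j * sin t)"
    by (simp add: sin_diff)
  moreover have "xi a n j = 1 + a^2 - 2 * a * cos t"
    by (simp add: xi_def t_def)
  ultimately have "poly (toeplitz_char_poly a m) (xi a n j) * sin t = (- ((-a)^m * (-1)^j)) * sin t"
    using poly_toeplitz_char_poly_cos[of a m t] by simp
  then have Pm: "poly (toeplitz_char_poly a m) (xi a n j) = - ((-a)^m * (-1)^j)"
    using \<open>0 < sin t\<close> mult_right_cancel[of "sin t"] by (metis less_irrefl)
  have "poly (char_poly (FtF a n)) (xi a n j) =
      poly (toeplitz_char_poly a n) (xi a n j) + a^2 * poly (toeplitz_char_poly a m) (xi a n j)"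
    unfolding n by (simp add: poly_char_poly_FtF)
  also have "\<dots> = a^2 * (- ((-a)^m * (-1)^j))"
    using Pm poly_toeplitz_char_poly_xi[of j n a] assms by simp
  also have "\<dots> = (-1)^(n + j) * a^(Suc n)"
    unfolding n power_minus[of a] power_add by (simp add: power2_eq_square)
  finally show ?thesis .
qed

lemma sorted_eigenvalues_FtF:
  assumes "a > 0" and "n > 0"
  defines "es \<equiv> sorted_eigenvalues (FtF a n)"
  shows "length es = n" and "prod_list es = 1" and "0 < es ! 0"
    and "\<And>j. j < n \<Longrightarrow> es ! j < xi a n (Suc j)"
    and "\<And>j. 0 < j \<Longrightarrow> j < n \<Longrightarrow> xi a (n - 1) j < es ! j"
proof -
  define lo where "lo j = (if j = 0 then 0 else xi a (n - 1) j)" for j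
  define hi where "hi j = xi a n (Suc j)" for j
  let ?q = "poly (char_poly (FtF a n))"
  have sign_change: "lo j < hi j \<and> ?q (lo j) * ?q (hi j) < 0" if "j < n" for j
  proof (cases "j = 0")
    case True
    have "(a - 1)^2 < hi 0"
      using sq_less_xi[of a 1 n] assms by (simp add: hi_def)
    then have "0 < hi 0"
      by (meson le_less_trans zero_le_power2)
    moreover have "?q (lo 0) * ?q (hi 0) = - (a^(Suc n))"
      using poly_char_poly_FtF_0 poly_char_poly_FtF_xi[of 1 n a] assms by (simp add: lo_def hi_def)
    ultimately show ?thesis
      using True assms(1) by (simp add: lo_def)
  next
    case False
    have "real j / real (Suc (n - 1)) < real (Suc j) / real (Suc n)"
      using that False by (simp add: field_simps)
    then have "lo j < hi j"
      using xi_less_xi[of a j "n - 1" "Suc j" n] assms False that by (simp add: lo_def hi_def)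
    moreover have "?q (lo j) * ?q (hi j) = - (a^n * a^(Suc n))"
      using poly_char_poly_FtF_xi_prev[of j n a] poly_char_poly_FtF_xi[of "Suc j" n a] False that
      by (simp add: lo_def hi_def)
    ultimately show ?thesis
      using assms(1) by simp
  qed
  have disjoint: "hi j \<le> lo (Suc j)" if "Suc j < n" for j
  proof -
    have "real (Suc j) / real (Suc n) < real (Suc j) / real (Suc (n - 1))"
      using that by (intro divide_strict_left_mono) auto
    then show ?thesis
      using xi_less_xi[of a "Suc j" n "Suc j" "n - 1"] assms that by (simp add: lo_def hi_def)
  qed
  note intervals = sorted_eigenvalues_in_intervals[OF FtF_carrier, of n lo hi a, folded es_def]
  show "length es = n"
    using intervals sign_change disjoint by blast
  show "prod_list es = 1"
    using prod_list_eq_det[OF FtF_carrier] intervals sign_change disjoint det_FtF by metis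
  show "0 < es ! 0"
    using intervals sign_change disjoint assms(2) by (metis lo_def)
  show "\<And>j. j < n \<Longrightarrow> es ! j < xi a n (Suc j)"
    using intervals sign_change disjoint by (metis hi_def)
  show "\<And>j. 0 < j \<Longrightarrow> j < n \<Longrightarrow> xi a (n - 1) j < es ! j"
    using intervals sign_change disjoint by (metis lo_def not_less0)
qed

section \<open>Bounds on the eigenvalues \<open>\<mu>\<close>\<close>

lemma xi_less_mu:
  assumes "a > 0" and "2 \<le> i" and "i \<le> n"
  shows "xi a (n - 1) (i - 1) < mu a n i"
  using sorted_eigenvalues_FtF(5)[of a n "i - 1"] assms by (simp add: mu_def)

lemma mu_less_xi:
  assumes "a > 0" and "1 \<le> i" and "i \<le> n"
  shows "mu a n i < xi a n i"
  using sorted_eigenvalues_FtF(4)[of a n "i - 1"] assms by (simp add: mu_def)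

lemma mu_1_pos:
  assumes "a > 0" and "n > 0"
  shows "0 < mu a n 1"
  using sorted_eigenvalues_FtF(3)[OF assms] by (simp add: mu_def)

lemma prod_mu:
  assumes "a > 0" and "n > 0"
  shows "(\<Prod>i=1..n. mu a n i) = 1"
proof -
  let ?es = "sorted_eigenvalues (FtF a n)"
  have "(\<Prod>i=1..n. mu a n i) = (\<Prod>k<n. ?es ! k)"
    unfolding One_nat_def prod.atLeast1_atMost_eq by (simp add: mu_def)
  also have "\<dots> = prod_list (map ((!) ?es) [0..<length ?es])"
    using sorted_eigenvalues_FtF(1)[OF assms]
    by (simp add: prod.distinct_set_conv_list[symmetric] lessThan_atLeast0)
  also have "\<dots> = 1"
    using sorted_eigenvalues_FtF(2)[OF assms] by (simp add: map_nth)
  finally show ?thesis .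
qed

lemma mu_1_upper_bound:
  assumes "a > 1" and "n > 0"
  shows "mu a n 1 * (a^(2 * n) - 1) \<le> a^2 - 1"
proof -
  obtain m where n: "n = Suc m"
    using assms(2) by (cases n) auto
  have "(\<Prod>i=1..m. xi a m i) \<le> (\<Prod>i=1..m. mu a n (Suc i))"
  proof (rule prod_mono)
    fix i assume "i \<in> {1..m}"
    then have "(a - 1)^2 < xi a m i" and "xi a m i < mu a n (Suc i)"
      using sq_less_xi[of a i m] xi_less_mu[of a "Suc i" n] assms n by auto
    then show "0 \<le> xi a m i \<and> xi a m i \<le> mu a n (Suc i)"
      using zero_le_power2[of "a - 1"] by linarith
  qed
  then have "mu a n 1 * (\<Prod>i=1..m. xi a m i) \<le> mu a n 1 * (\<Prod>i=1..m. mu a n (Suc i))"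
    using mu_1_pos[of a n] assms by (intro mult_left_mono) auto
  also have "\<dots> = 1"
    using prod_mu[of a n] assms unfolding n prod_atLeast1_atMost_Suc by simp
  finally have le_1: "mu a n 1 * (\<Prod>i=1..m. xi a m i) \<le> 1" .
  have "mu a n 1 * (a^(2 * n) - 1) = mu a n 1 * (\<Prod>i=1..m. xi a m i) * (a^2 - 1)"
    using prod_xi[of a m] assms n by (simp add: mult.assoc)
  also have "\<dots> \<le> 1 * (a^2 - 1)"
    using le_1 assms(1) by (intro mult_right_mono) (simp_all add: one_le_power)
  finally show ?thesis
    by simp
qed

lemma mu_1_lower_bound:
  assumes "a > 1" and "n > 0"
  shows "(a^2 - 1) * (a - 1)^2 \<le> mu a n 1 * (a^(2 * n + 2) - 1)"
proof -
  obtain m where n: "n = Suc m"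
    using assms(2) by (cases n) auto
  let ?P = "\<Prod>i=1..m. mu a n (Suc i)"
  have mu_Suc: "0 \<le> mu a n (Suc i) \<and> mu a n (Suc i) \<le> xi a n (Suc i)" if "i \<in> {1..m}" for i
  proof -
    have "(a - 1)^2 < xi a m i" and "xi a m i < mu a n (Suc i)" and "mu a n (Suc i) < xi a n (Suc i)"
      using that sq_less_xi[of a i m] xi_less_mu[of a "Suc i" n] mu_less_xi[of a "Suc i" n] assms n
      by auto
    then show ?thesis
      using zero_le_power2[of "a - 1"] by linarith
  qed
  have "(a - 1)^2 * ?P \<le> xi a n 1 * (\<Prod>i=1..m. xi a n (Suc i))"
  proof (rule mult_mono)
    show "(a - 1)^2 \<le> xi a n 1"
      using sq_less_xi[of a 1 n] assms by simp
    then show "0 \<le> xi a n 1"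
      using zero_le_power2[of "a - 1"] by linarith
    show "?P \<le> (\<Prod>i=1..m. xi a n (Suc i))"
      using mu_Suc by (rule prod_mono)
    show "0 \<le> ?P"
      using mu_Suc by (intro prod_nonneg) blast
  qed
  also have "\<dots> = (\<Prod>i=1..n. xi a n i)"
    by (simp only: n prod_atLeast1_atMost_Suc)
  finally have "(a - 1)^2 * ?P * (a^2 - 1) \<le> (\<Prod>i=1..n. xi a n i) * (a^2 - 1)"
    using assms(1) by (intro mult_right_mono) (simp_all add: one_le_power)
  also have "\<dots> = a^(2 * n + 2) - 1"
    using prod_xi[of a n] assms by simp
  finally have bound: "(a - 1)^2 * ?P * (a^2 - 1) \<le> a^(2 * n + 2) - 1" .
  have "mu a n 1 * ?P = 1"
    using prod_mu[of a n] assms unfolding n prod_atLeast1_atMost_Suc by simp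
  then have "(a^2 - 1) * (a - 1)^2 = (mu a n 1 * ?P) * ((a - 1)^2 * (a^2 - 1))"
    by (simp add: mult.commute)
  also have "\<dots> = mu a n 1 * ((a - 1)^2 * ?P * (a^2 - 1))"
    by (simp only: mult_ac)
  also have "\<dots> \<le> mu a n 1 * (a^(2 * n + 2) - 1)"
    using bound mu_1_pos[of a n] assms by (intro mult_left_mono) auto
  finally show ?thesis .
qed

section \<open>Logarithmic estimates\<close>

lemma ln_mu_1_le:
  assumes "a > 1" and "n > 0"
  shows "ln (mu a n 1) \<le> 2 * ln (a + 1) - 2 * real n * ln a"
proof -
  let ?x = "mu a n 1"
  have x: "0 < ?x"
    using mu_1_pos[of a n] assms by simp
  have bound: "?x * (a^(2 * n) - 1) \<le> a^2 - 1"
    using mu_1_upper_bound[OF assms] .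
  have "a^2 \<le> a^(2 * n)"
    using assms by (intro power_increasing) auto
  then have "?x * (a^(2 * n) - 1) \<le> 1 * (a^(2 * n) - 1)"
    using bound by simp
  moreover have "0 < a^(2 * n) - 1"
    using assms by (simp add: one_less_power)
  ultimately have "?x \<le> 1"
    by (simp only: mult_le_cancel_right_pos)
  have "a^2 \<le> (a + 1)^2"
    using assms(1) by (intro power_mono) auto
  moreover have "?x * a^(2 * n) = ?x * (a^(2 * n) - 1) + ?x"
    by (simp add: algebra_simps)
  ultimately have "?x * a^(2 * n) \<le> (a + 1)^2"
    using bound \<open>?x \<le> 1\<close> by linarith
  then have "ln (?x * a^(2 * n)) \<le> ln ((a + 1)^2)"
    using assms(1) x by simp
  then show ?thesis
    using assms(1) x by (simp add: ln_mult ln_realpow)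
qed

lemma ln_ratio_le:
  assumes "a > (1::real)"
  shows "ln (a + 1) - ln (a - 1) \<le> 2 * a * pi / (a^2 - 1)"
proof -
  have "0 < a^2 - 1"
    using assms by (simp add: one_less_power)
  have "ln (a + 1) - ln (a - 1) = ln ((a + 1) / (a - 1))"
    using assms by (simp add: ln_divide_pos)
  also have "\<dots> \<le> (a + 1) / (a - 1) - 1"
    using assms by (intro ln_le_minus_one) simp
  also have "\<dots> = 2 * (a + 1) / (a^2 - 1)"
    using assms \<open>0 < a^2 - 1\<close> by (simp add: field_simps power2_eq_square)
  also have "\<dots> \<le> 2 * a * pi / (a^2 - 1)"
  proof (rule divide_right_mono)
    have "a * 2 \<le> a * pi"
      using assms pi_ge_two by simp
    then have "a + 1 \<le> a * pi"
      using assms by linarith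
    then show "2 * (a + 1) \<le> 2 * a * pi"
      by simp
  qed (use \<open>0 < a^2 - 1\<close> in simp)
  finally show ?thesis .
qed

lemma neg_ln_mu_1_le:
  assumes "a > 1" and "n > 0"
  shows "- ln (mu a n 1) \<le> 2 * real n * ln a + 2 * ln (a / (a^2 - 1)) + 2 * a * pi / (a^2 - 1)"
proof -
  let ?x = "mu a n 1"
  have x: "0 < ?x"
    using mu_1_pos[of a n] assms by simp
  have a2: "0 < a^2 - 1"
    using assms(1) by (simp add: one_less_power)
  have "?x * (a^(2 * n + 2) - 1) \<le> ?x * a^(2 * n + 2)"
    using x by simp
  with mu_1_lower_bound[OF assms] have "(a^2 - 1) * (a - 1)^2 \<le> ?x * a^(2 * n + 2)"
    by (rule order_trans)
  then have "ln ((a^2 - 1) * (a - 1)^2) \<le> ln (?x * a^(2 * n + 2))"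
    using assms(1) a2 by (intro ln_mono) auto
  then have "ln (a^2 - 1) + 2 * ln (a - 1) \<le> ln ?x + (2 * real n + 2) * ln a"
    using assms(1) x a2 by (simp add: ln_mult ln_realpow distrib_right)
  moreover have "ln (a^2 - 1) = ln (a - 1) + ln (a + 1)"
  proof -
    have "a^2 - 1 = (a - 1) * (a + 1)"
      by (simp add: algebra_simps power2_eq_square)
    then show ?thesis
      using assms(1) by (simp only: ln_mult) simp_all
  qed
  moreover have "ln (a / (a^2 - 1)) = ln a - ln (a^2 - 1)"
    using assms(1) a2 by (intro ln_divide_pos) auto
  ultimately show ?thesis
    using ln_ratio_le[OF assms(1)] by (simp add: algebra_simps)
qed

theorem lemma5:
  fixes a :: real and n :: nat
  assumes "a > 1" and "n \<ge> 2"
  defines "c1 \<equiv> 2 * ln (a + 1) + a * pi / (a^2 - 1)"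
      and "c2 \<equiv> 2 * ln (a / (a^2 - 1)) + 2 * a * pi / (a^2 - 1)"
  shows "(\<forall>i \<in> {2..n}. xi a (n - 1) (i - 1) \<le> mu a n i \<and> mu a n i \<le> xi a n i)
       \<and> 2 * ln a + c2 / real n \<ge> - (1 / real n) * ln (mu a n 1)
       \<and> - (1 / real n) * ln (mu a n 1) \<ge> 2 * ln a - c1 / real n"
proof -
  have a: "a > 0" and n: "n > 0"
    using assms(1,2) by auto
  have interlacing: "\<forall>i \<in> {2..n}. xi a (n - 1) (i - 1) \<le> mu a n i \<and> mu a n i \<le> xi a n i"
    using xi_less_mu[OF a] mu_less_xi[OF a] by (auto intro: less_imp_le)
  have "- ln (mu a n 1) / real n \<le> (2 * real n * ln a + c2) / real n"
    using neg_ln_mu_1_le[OF assms(1) n] unfolding c2_def by (intro divide_right_mono) auto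
  then have upper: "- (1 / real n) * ln (mu a n 1) \<le> 2 * ln a + c2 / real n"
    using n by (simp add: field_simps)
  have "0 \<le> a * pi / (a^2 - 1)"
    using assms(1) by (simp add: one_le_power)
  then have "(2 * real n * ln a - c1) / real n \<le> - ln (mu a n 1) / real n"
    using ln_mu_1_le[OF assms(1) n] unfolding c1_def by (intro divide_right_mono) auto
  then have lower: "2 * ln a - c1 / real n \<le> - (1 / real n) * ln (mu a n 1)"
    using n by (simp add: field_simps)
  show ?thesis
    using interlacing upper lower by blast
qed

end
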